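(* Let $t>0$, let $X\subset\mathbb{R}^d$ and $Y\subset\mathbb{R}^m$ be closed sets, and let $f:X\to Y$ be a $(1/t)$-bi-Hölder homeomorphism. Then for every $x_0\in X$ and every $T\in\mathrm{Tan}(X,x_0)$ there exist $T'\in\mathrm{Tan}(Y,f(x_0))$ and a $(1/t)$-bi-Hölder homeomorphism $g:T\to T'$.
   Context: A map $f:X\to Y$ is a $\beta$-bi-Hölder homeomorphism if it is a bijection and there is $C\ge1$ with $C^{-1}|x-y|^\beta\le|f(x)-f(y)|\le C|x-y|^\beta$ for all $x,y\in X$. With $\mathrm{exc}(A,B)=\sup_{a\in A}\inf_{b\in B}|a-b|$, closed sets $X_m\to X$ (Attouch–Wets) iff for every $r>0$, $\mathrm{exc}(X_m\cap\overline{B}(\mathbf{0},r),X)\to0$ and $\mathrm{exc}(X\cap\overline{B}(\mathbf{0},r),X_m)\to0$. A closed $T\ni\mathbf{0}$ belongs to $\mathrm{Tan}(X,x)$ if $r_j^{-1}(X-x)\to T$ for some $r_j\downarrow0$. *)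

theory Defs
  imports "HOL-Analysis.Analysis"
begin

definition bi_holder_homeo :: "real \<Rightarrow> ('a::metric_space \<Rightarrow> 'b::metric_space) \<Rightarrow> 'a set \<Rightarrow> 'b set \<Rightarrow> bool" where
  "bi_holder_homeo \<beta> f X Y \<longleftrightarrow> bij_betw f X Y \<and>
     (\<exists>C\<ge>1. \<forall>x\<in>X. \<forall>y\<in>X.
        dist x y powr \<beta> / C \<le> dist (f x) (f y) \<and> dist (f x) (f y) \<le> C * dist x y powr \<beta>)"

text \<open>Excess e(A,B) = sup over a in A of inf over b in B of |a-b|, with the convention
  sup of the empty set = 0 (and inf over empty B = +infinity).\<close>
definition exc :: "'a::metric_space set \<Rightarrow> 'a set \<Rightarrow> ereal" where
  "exc A B = (if A = {} then 0 else (SUP a\<in>A. INF b\<in>B. ereal (dist a b)))"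

definition attouch_wets :: "(nat \<Rightarrow> 'a::real_normed_vector set) \<Rightarrow> 'a set \<Rightarrow> bool" where
  "attouch_wets Xs X \<longleftrightarrow> (\<forall>r>0.
      ((\<lambda>m. exc (Xs m \<inter> cball 0 r) X) \<longlongrightarrow> 0) sequentially \<and>
      ((\<lambda>m. exc (X \<inter> cball 0 r) (Xs m)) \<longlongrightarrow> 0) sequentially)"

definition Tan :: "'a::real_normed_vector set \<Rightarrow> 'a \<Rightarrow> 'a set set" where
  "Tan X x = {T. closed T \<and> 0 \<in> T \<and>
      (\<exists>r::nat \<Rightarrow> real. (\<forall>j. r j > 0) \<and> decseq r \<and> r \<longlonglongrightarrow> 0 \<and>
         attouch_wets (\<lambda>j. (\<lambda>y. (1 / r j) *\<^sub>R (y - x)) ` X) T)}"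

end

theory Submission
  imports Defs "HOL-Library.Diagonal_Subsequence"
begin

(*
  Blow up X at x0 by scales r j and Y at f x0 by the scales (r j) powr (1/t).  The conjugated maps
  F j u = (f (x0 + r j u) - f x0) / (r j) powr (1/t) are (1/t)-bi-Hoelder with the constant of f
  and fix 0.  A diagonal argument over a countable dense subset of T (Arzela-Ascoli for maps with
  varying domains) gives a subsequence along which F j converges continuously to a map g on T, and
  g inherits the two-sided Hoelder bounds.  The lower bound keeps preimages of bounded sets bounded,
  so by compactness the rescaled copies of Y converge in the Attouch-Wets sense to g ` T, which is
  therefore a tangent of Y at f x0.
*)

lemma Lim_transform_dist_bound:
  fixes f g :: "'b \<Rightarrow> 'a::metric_space"
  assumes "(g \<longlongrightarrow> l) F" "(h \<longlongrightarrow> 0) F" "eventually (\<lambda>x. dist (f x) (g x) \<le> h x) F"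
  shows "(f \<longlongrightarrow> l) F"
proof -
  have lim: "((\<lambda>x. h x + dist (g x) l) \<longlongrightarrow> 0) F"
    using tendsto_add[OF assms(2) tendsto_dist_iff[THEN iffD1, OF assms(1)]] by simp
  have bound: "eventually (\<lambda>x. dist (f x) l \<le> h x + dist (g x) l) F"
    using assms(3) by eventually_elim (metis add_right_mono dist_triangle order_trans)
  have "((\<lambda>x. dist (f x) l) \<longlongrightarrow> 0) F"
    by (rule tendsto_sandwich[OF _ bound tendsto_const lim]) simp
  then show ?thesis by (rule tendsto_dist_iff[THEN iffD2])
qed

lemma tendsto_dist_powr:
  assumes "(f \<longlongrightarrow> l) F" "(g \<longlongrightarrow> m) F" "\<beta> > 0"
  shows "((\<lambda>x. dist (f x) (g x) powr \<beta>) \<longlongrightarrow> dist l m powr \<beta>) F"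
  using assms by (intro tendsto_powr' tendsto_dist tendsto_const) auto

lemma Cauchy_if_near_Cauchy:
  fixes x :: "nat \<Rightarrow> 'a::metric_space"
  assumes "\<And>e. e > 0 \<Longrightarrow> \<exists>y. Cauchy y \<and> eventually (\<lambda>n. dist (x n) (y n) < e) sequentially"
  shows "Cauchy x"
proof (rule metric_CauchyI)
  fix e :: real
  assume "e > 0"
  then obtain y where y: "Cauchy y" "eventually (\<lambda>n. dist (x n) (y n) < e / 3) sequentially"
    using assms[of "e / 3"] by auto
  obtain M where M: "\<And>m n. M \<le> m \<Longrightarrow> M \<le> n \<Longrightarrow> dist (y m) (y n) < e / 3"
    using metric_CauchyD[OF y(1)] \<open>e > 0\<close> by (meson divide_pos_pos zero_less_numeral)
  obtain N where N: "\<And>n. N \<le> n \<Longrightarrow> dist (x n) (y n) < e / 3"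
    using y(2) by (auto simp: eventually_sequentially)
  have "dist (x m) (x n) < e" if "max M N \<le> m" "max M N \<le> n" for m n
  proof -
    have "dist (x m) (x n) \<le> dist (x m) (y m) + dist (y m) (y n) + dist (x n) (y n)"
      using dist_triangle[of "x m" "x n" "y m"] dist_triangle[of "y m" "x n" "y n"]
        dist_commute[of "x n" "y n"] by linarith
    then show ?thesis using M[of m n] N[of m] N[of n] that by simp
  qed
  then show "\<exists>M. \<forall>m\<ge>M. \<forall>n\<ge>M. dist (x m) (x n) < e" by blast
qed

lemma powr_le_imp_le_powr_inverse:
  fixes x K \<beta> :: real
  assumes "0 \<le> x" "0 < \<beta>" "x powr \<beta> \<le> K"
  shows "x \<le> K powr (1 / \<beta>)"
proof -
  have "x = (x powr \<beta>) powr (1 / \<beta>)" using assms by (simp add: powr_powr)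
  also have "\<dots> \<le> K powr (1 / \<beta>)" using assms by (intro powr_mono2) auto
  finally show ?thesis .
qed

section \<open>Attouch-Wets convergence via sequences\<close>

lemma exc_nonneg: "0 \<le> exc A B"
proof (cases "A = {}")
  case False
  then obtain a where "a \<in> A" by blast
  have "0 \<le> (INF b\<in>B. ereal (dist a b))" by (rule INF_greatest) simp
  also have "\<dots> \<le> (SUP a\<in>A. INF b\<in>B. ereal (dist a b))" using \<open>a \<in> A\<close> by (rule SUP_upper)
  finally show ?thesis using False by (simp add: exc_def)
qed (simp add: exc_def)

lemma exc_lessD:
  assumes "exc A B < ereal e" "a \<in> A"
  shows "\<exists>b\<in>B. dist a b < e"
proof -
  have "A \<noteq> {}" using assms(2) by blast
  then have "(SUP a\<in>A. INF b\<in>B. ereal (dist a b)) < ereal e"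
    using assms(1) by (simp add: exc_def)
  then have "(INF b\<in>B. ereal (dist a b)) < ereal e" using assms(2) by (rule SUP_lessD)
  then show ?thesis by (auto simp: INF_less_iff)
qed

lemma exc_le_ereal:
  assumes "e > 0" "\<forall>a\<in>A. \<exists>b\<in>B. dist a b < e"
  shows "exc A B \<le> ereal e"
proof -
  have "(INF b\<in>B. ereal (dist a b)) \<le> ereal e" if "a \<in> A" for a
    using assms(2) that by (force intro: INF_lower2)
  then have "(SUP a\<in>A. INF b\<in>B. ereal (dist a b)) \<le> ereal e" by (rule SUP_least)
  then show ?thesis using assms(1) by (simp add: exc_def)
qed

lemma exc_tendsto_0_iff:
  "((\<lambda>m. exc (A m) (B m)) \<longlongrightarrow> 0) sequentially \<longleftrightarrow>
   (\<forall>e>0. eventually (\<lambda>m. \<forall>a\<in>A m. \<exists>b\<in>B m. dist a b < e) sequentially)"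
proof
  assume lim: "((\<lambda>m. exc (A m) (B m)) \<longlongrightarrow> 0) sequentially"
  show "\<forall>e>0. eventually (\<lambda>m. \<forall>a\<in>A m. \<exists>b\<in>B m. dist a b < e) sequentially"
  proof (intro allI impI)
    fix e :: real
    assume "e > 0"
    then have "eventually (\<lambda>m. exc (A m) (B m) < ereal e) sequentially"
      using order_tendstoD(2)[OF lim] by simp
    then show "eventually (\<lambda>m. \<forall>a\<in>A m. \<exists>b\<in>B m. dist a b < e) sequentially"
      by eventually_elim (auto dest: exc_lessD)
  qed
next
  assume near: "\<forall>e>0. eventually (\<lambda>m. \<forall>a\<in>A m. \<exists>b\<in>B m. dist a b < e) sequentially"
  show "((\<lambda>m. exc (A m) (B m)) \<longlongrightarrow> 0) sequentially"
  proof (rule order_tendstoI)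
    fix y :: ereal
    assume "y < 0"
    then show "eventually (\<lambda>m. y < exc (A m) (B m)) sequentially"
      by (intro always_eventually allI) (rule less_le_trans[OF _ exc_nonneg])
  next
    fix y :: ereal
    assume "0 < y"
    then obtain e where "0 < ereal e" "ereal e < y" using ereal_dense2 by blast
    then have "eventually (\<lambda>m. \<forall>a\<in>A m. \<exists>b\<in>B m. dist a b < e) sequentially"
      using near by simp
    then show "eventually (\<lambda>m. exc (A m) (B m) < y) sequentially"
    proof eventually_elim
      case (elim m)
      then have "exc (A m) (B m) \<le> ereal e" using \<open>0 < ereal e\<close> by (intro exc_le_ereal) auto
      then show ?case using \<open>ereal e < y\<close> by simp
    qed
  qed
qed

lemma attouch_wets_iff:
  "attouch_wets Xs X \<longleftrightarrow> (\<forall>r>0. \<forall>e>0.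
      eventually (\<lambda>m. \<forall>a\<in>Xs m \<inter> cball 0 r. \<exists>b\<in>X. dist a b < e) sequentially \<and>
      eventually (\<lambda>m. \<forall>a\<in>X \<inter> cball 0 r. \<exists>b\<in>Xs m. dist a b < e) sequentially)"
  unfolding attouch_wets_def exc_tendsto_0_iff by blast

lemma attouch_wets_subseq:
  assumes "attouch_wets Xs T" "strict_mono \<phi>"
  shows "attouch_wets (\<lambda>j. Xs (\<phi> j)) T"
  using assms(1) LIMSEQ_subseq_LIMSEQ[OF _ assms(2)] unfolding attouch_wets_def o_def by blast

lemma attouch_wets_infdist_tendsto_0:
  fixes Xs :: "nat \<Rightarrow> 'a::real_normed_vector set"
  assumes "attouch_wets Xs T" "p \<in> T"
  shows "(\<lambda>j. infdist p (Xs j)) \<longlonglongrightarrow> 0"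
proof (rule order_tendstoI)
  fix e :: real
  assume "0 < e"
  moreover have "norm p + 1 > 0" by (simp add: add_nonneg_pos)
  ultimately have "eventually (\<lambda>j. \<forall>a\<in>T \<inter> cball 0 (norm p + 1). \<exists>b\<in>Xs j. dist a b < e) sequentially"
    using assms(1) unfolding attouch_wets_iff by blast
  then show "eventually (\<lambda>j. infdist p (Xs j) < e) sequentially"
  proof eventually_elim
    case (elim j)
    moreover have "p \<in> T \<inter> cball 0 (norm p + 1)" using assms(2) by (simp add: dist_norm)
    ultimately obtain b where "b \<in> Xs j" "dist p b < e" by blast
    then show ?case by (meson infdist_le le_less_trans)
  qed
next
  fix e :: real
  assume "e < 0"
  then show "eventually (\<lambda>j. e < infdist p (Xs j)) sequentially"
    by (intro always_eventually allI) (rule less_le_trans[OF _ infdist_nonneg])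
qed

lemma attouch_wets_approx_seq:
  fixes Xs :: "nat \<Rightarrow> 'a::real_normed_vector set"
  assumes "attouch_wets Xs T" "\<And>j. Xs j \<noteq> {}" "p \<in> T"
  obtains a where "\<And>j. a j \<in> Xs j" "a \<longlonglongrightarrow> p"
proof -
  have "\<exists>b\<in>Xs j. dist p b < infdist p (Xs j) + inverse (Suc j)" for j
  proof -
    have "Inf (dist p ` Xs j) < infdist p (Xs j) + inverse (Suc j)"
      using assms(2) by (simp add: infdist_notempty)
    moreover have "bdd_below (dist p ` Xs j)" by (rule bdd_belowI[of _ 0]) auto
    ultimately show ?thesis using assms(2)[of j] by (simp add: cInf_less_iff)
  qed
  then obtain a where a: "\<And>j. a j \<in> Xs j" "\<And>j. dist p (a j) < infdist p (Xs j) + inverse (Suc j)"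
    by metis
  have lim: "(\<lambda>j. infdist p (Xs j) + inverse (Suc j)) \<longlonglongrightarrow> 0"
    using tendsto_add[OF attouch_wets_infdist_tendsto_0[OF assms(1,3)] LIMSEQ_inverse_real_of_nat]
    by simp
  have "\<forall>j. dist (a j) p \<le> infdist p (Xs j) + inverse (Suc j)"
    using a(2) by (simp add: dist_commute less_imp_le)
  then have "a \<longlonglongrightarrow> p"
    by (rule Lim_transform_dist_bound[OF tendsto_const lim always_eventually])
  with a(1) show thesis by (rule that)
qed

lemma attouch_wets_limit_mem:
  fixes Xs :: "nat \<Rightarrow> 'a::real_normed_vector set"
  assumes "attouch_wets Xs T" "closed T" "strict_mono k" "\<And>j. u j \<in> Xs (k j)" "u \<longlonglongrightarrow> p"
  shows "p \<in> T"
proof -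
  obtain r where r: "r > 0" "\<And>j. norm (u j) \<le> r"
    using convergent_imp_bounded[OF assms(5)] by (auto simp: bounded_pos)
  have "\<exists>b\<in>T. dist b p < e" if "e > 0" for e
  proof -
    have "eventually (\<lambda>m. \<forall>a\<in>Xs m \<inter> cball 0 r. \<exists>b\<in>T. dist a b < e / 2) sequentially"
      using assms(1) r(1) \<open>e > 0\<close> unfolding attouch_wets_iff by (meson half_gt_zero)
    from eventually_subseq[OF assms(3) this]
    have "eventually (\<lambda>j. \<exists>b\<in>T. dist (u j) b < e / 2) sequentially"
    proof eventually_elim
      case (elim j)
      moreover have "u j \<in> Xs (k j) \<inter> cball 0 r" using assms(4) r(2) by simp
      ultimately show ?case by blast
    qed
    moreover have "eventually (\<lambda>j. dist (u j) p < e / 2) sequentially"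
      using assms(5) \<open>e > 0\<close> tendsto_iff half_gt_zero by blast
    ultimately have "eventually (\<lambda>j. (\<exists>b\<in>T. dist (u j) b < e / 2) \<and> dist (u j) p < e / 2) sequentially"
      by (rule eventually_conj)
    then obtain j b where "b \<in> T" "dist (u j) b < e / 2" "dist (u j) p < e / 2"
      using eventually_happens'[OF sequentially_bot] by blast
    then show ?thesis by (metis dist_commute dist_triangle_half_l)
  qed
  then have "p \<in> closure T" by (simp add: closure_approachable)
  then show ?thesis using assms(2) by (simp add: closure_closed)
qed

lemma eventually_near_if_limits_mem:
  fixes Xs :: "nat \<Rightarrow> 'a::{real_normed_vector, heine_borel} set"
  assumes limit_mem: "\<And>k u p. strict_mono k \<Longrightarrow> (\<And>j. u j \<in> Xs (k j)) \<Longrightarrow> u \<longlonglongrightarrow> p \<Longrightarrow> p \<in> T"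
    and "e > 0"
  shows "eventually (\<lambda>m. \<forall>a\<in>Xs m \<inter> cball 0 r. \<exists>b\<in>T. dist a b < e) sequentially"
    (is "eventually ?P sequentially")
proof (rule ccontr)
  assume "\<not> eventually ?P sequentially"
  from not_eventually_sequentiallyD[OF this] obtain k :: "nat \<Rightarrow> nat" where k: "strict_mono k"
    and "\<forall>j. \<not> ?P (k j)"
    by blast
  then have "\<forall>j. \<exists>a. a \<in> Xs (k j) \<inter> cball 0 r \<and> (\<forall>b\<in>T. e \<le> dist a b)"
    by (force simp: not_less)
  from choice[OF this] obtain u
    where u: "\<And>j. u j \<in> Xs (k j)" "\<And>j. u j \<in> cball 0 r"
      and far: "\<And>j b. b \<in> T \<Longrightarrow> e \<le> dist (u j) b"
    by blast
  have "bounded (range u)" using u(2) by (intro bounded_subset[OF bounded_cball[of 0 r]]) auto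
  then obtain h p where h: "strict_mono h" "(u \<circ> h) \<longlonglongrightarrow> p"
    using bounded_imp_convergent_subsequence by blast
  have "p \<in> T" using limit_mem[OF strict_mono_o[OF k h(1)] _ h(2)] u(1) by simp
  have "eventually (\<lambda>j. dist (u (h j)) p < e) sequentially"
    using h(2) \<open>e > 0\<close> by (simp add: tendsto_iff)
  moreover have "\<not> dist (u (h j)) p < e" for j using far[OF \<open>p \<in> T\<close>] by (simp add: not_less)
  ultimately show False by (simp add: eventually_False_sequentially)
qed

lemma eventually_near_if_approx:
  fixes Xs :: "nat \<Rightarrow> 'a::{real_normed_vector, heine_borel} set"
  assumes "closed T" and approx: "\<And>p. p \<in> T \<Longrightarrow> \<exists>a. (\<forall>j. a j \<in> Xs j) \<and> a \<longlonglongrightarrow> p"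
    and "e > 0"
  shows "eventually (\<lambda>m. \<forall>a\<in>T \<inter> cball 0 r. \<exists>b\<in>Xs m. dist a b < e) sequentially"
    (is "eventually ?P sequentially")
proof (rule ccontr)
  assume "\<not> eventually ?P sequentially"
  from not_eventually_sequentiallyD[OF this] obtain k :: "nat \<Rightarrow> nat" where k: "strict_mono k"
    and "\<forall>j. \<not> ?P (k j)"
    by blast
  then have "\<forall>j. \<exists>p. p \<in> T \<inter> cball 0 r \<and> (\<forall>b\<in>Xs (k j). e \<le> dist p b)"
    by (force simp: not_less)
  from choice[OF this] obtain p
    where p: "\<And>j. p j \<in> T" "\<And>j. p j \<in> cball 0 r"
      and far: "\<And>j b. b \<in> Xs (k j) \<Longrightarrow> e \<le> dist (p j) b"
    by blast
  have "bounded (range p)" using p(2) by (intro bounded_subset[OF bounded_cball[of 0 r]]) auto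
  then obtain h q where h: "strict_mono h" "(p \<circ> h) \<longlonglongrightarrow> q"
    using bounded_imp_convergent_subsequence by blast
  have "q \<in> T" using closed_sequentially[OF \<open>closed T\<close> _ h(2)] p(1) by simp
  then obtain a where a: "\<And>j. a j \<in> Xs j" "a \<longlonglongrightarrow> q" using approx by blast
  have "(a \<circ> (k \<circ> h)) \<longlonglongrightarrow> q"
    using LIMSEQ_subseq_LIMSEQ[OF a(2) strict_mono_o[OF k h(1)]] .
  then have "(\<lambda>j. dist (p (h j)) (a (k (h j)))) \<longlonglongrightarrow> dist q q"
    using h(2) by (intro tendsto_dist) (auto simp: o_def)
  then have "eventually (\<lambda>j. dist (p (h j)) (a (k (h j))) < e) sequentially"
    using \<open>e > 0\<close> by (simp add: order_tendsto_iff)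
  moreover have "\<not> dist (p (h j)) (a (k (h j))) < e" for j using far[OF a(1)] by (simp add: not_less)
  ultimately show False by (simp add: eventually_False_sequentially)
qed

lemma attouch_wets_if_sequential:
  fixes Xs :: "nat \<Rightarrow> 'a::{real_normed_vector, heine_borel} set"
  assumes "closed T"
    and "\<And>p. p \<in> T \<Longrightarrow> \<exists>a. (\<forall>j. a j \<in> Xs j) \<and> a \<longlonglongrightarrow> p"
    and "\<And>k u p. strict_mono k \<Longrightarrow> (\<And>j. u j \<in> Xs (k j)) \<Longrightarrow> u \<longlonglongrightarrow> p \<Longrightarrow> p \<in> T"
  shows "attouch_wets Xs T"
  unfolding attouch_wets_iff using eventually_near_if_limits_mem eventually_near_if_approx assms by blast

section \<open>Bi-Hoelder maps\<close>

definition bi_holder_on :: "real \<Rightarrow> real \<Rightarrow> 'a::metric_space set \<Rightarrow> ('a \<Rightarrow> 'b::metric_space) \<Rightarrow> bool"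
  where "bi_holder_on \<beta> C S f \<longleftrightarrow> (\<forall>x\<in>S. \<forall>y\<in>S.
    dist x y powr \<beta> / C \<le> dist (f x) (f y) \<and> dist (f x) (f y) \<le> C * dist x y powr \<beta>)"

lemma bi_holder_homeo_iff:
  "bi_holder_homeo \<beta> f X Y \<longleftrightarrow> bij_betw f X Y \<and> (\<exists>C\<ge>1. bi_holder_on \<beta> C X f)"
  by (simp add: bi_holder_homeo_def bi_holder_on_def)

lemma bi_holder_onD:
  assumes "bi_holder_on \<beta> C S f" "x \<in> S" "y \<in> S"
  shows bi_holder_on_lower: "dist x y powr \<beta> / C \<le> dist (f x) (f y)"
    and bi_holder_on_upper: "dist (f x) (f y) \<le> C * dist x y powr \<beta>"
  using assms by (auto simp: bi_holder_on_def)

lemma bi_holder_homeo_image: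
  assumes "bi_holder_on \<beta> C S f" "C \<ge> 1"
  shows "bi_holder_homeo \<beta> f S (f ` S)"
proof -
  have "x = y" if "x \<in> S" "y \<in> S" "f x = f y" for x y
  proof -
    have "dist x y powr \<beta> / C \<le> 0" using bi_holder_on_lower[OF assms(1) that(1,2)] that(3) by simp
    then have "\<not> 0 < dist x y powr \<beta>" using assms(2) by (simp add: divide_le_0_iff)
    then show "x = y" by simp
  qed
  then have "inj_on f S" by (rule inj_onI)
  then show ?thesis using assms by (auto simp: bi_holder_homeo_iff inj_on_imp_bij_betw)
qed

lemma bi_holder_on_norm_le:
  fixes f :: "'a::real_normed_vector \<Rightarrow> 'b::real_normed_vector"
  assumes "bi_holder_on \<beta> C S f" "0 \<in> S" "f 0 = 0" "u \<in> S" "norm (f u) \<le> B" "\<beta> > 0" "C > 0"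
  shows "norm u \<le> (C * B) powr (1 / \<beta>)"
proof -
  have "norm u powr \<beta> / C \<le> norm (f u)"
    using bi_holder_on_lower[OF assms(1) assms(4) assms(2)] by (simp add: assms(3))
  then have "norm u powr \<beta> \<le> C * norm (f u)"
    using \<open>C > 0\<close> by (simp add: divide_le_eq mult.commute)
  also have "\<dots> \<le> C * B" using assms(5) \<open>C > 0\<close> by simp
  finally show ?thesis using \<open>\<beta> > 0\<close> by (intro powr_le_imp_le_powr_inverse) auto
qed

lemma bi_holder_on_Cauchy_preimage:
  assumes "bi_holder_on \<beta> C S f" "\<beta> > 0" "C > 0" "\<And>n. x n \<in> S" "Cauchy (\<lambda>n. f (x n))"
  shows "Cauchy x"
proof (rule metric_CauchyI)
  fix e :: real
  assume "e > 0"
  then have "e powr \<beta> / C > 0" using \<open>C > 0\<close> by simp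
  then obtain M where M: "\<And>m n. M \<le> m \<Longrightarrow> M \<le> n \<Longrightarrow> dist (f (x m)) (f (x n)) < e powr \<beta> / C"
    using assms(5) by (meson metric_CauchyD)
  have "dist (x m) (x n) < e" if "M \<le> m" "M \<le> n" for m n
  proof (rule ccontr)
    assume "\<not> dist (x m) (x n) < e"
    then have "e powr \<beta> / C \<le> dist (x m) (x n) powr \<beta> / C"
      using \<open>e > 0\<close> \<open>\<beta> > 0\<close> \<open>C > 0\<close> by (simp add: divide_right_mono powr_mono2)
    also have "\<dots> \<le> dist (f (x m)) (f (x n))" using bi_holder_on_lower[OF assms(1) assms(4) assms(4)] .
    finally show False using M[OF that] by simp
  qed
  then show "\<exists>M. \<forall>m\<ge>M. \<forall>n\<ge>M. dist (x m) (x n) < e" by blast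
qed

lemma bi_holder_homeo_closed_image:
  fixes f :: "'a::complete_space \<Rightarrow> 'b::metric_space"
  assumes "bi_holder_homeo \<beta> f S S'" "closed S" "\<beta> > 0"
  shows "closed S'"
proof -
  obtain C where bij: "bij_betw f S S'" and "C \<ge> 1" and holder: "bi_holder_on \<beta> C S f"
    using assms(1) by (auto simp: bi_holder_homeo_iff)
  have "\<exists>l\<in>S'. y \<longlonglongrightarrow> l" if y: "\<And>n. y n \<in> S'" "Cauchy y" for y
  proof -
    define x where "x n = inv_into S f (y n)" for n
    have x: "x n \<in> S" "f (x n) = y n" for n
      using bij y(1) by (auto simp: x_def bij_betw_def inv_into_into f_inv_into_f)
    have "Cauchy x"
      using bi_holder_on_Cauchy_preimage[OF holder \<open>\<beta> > 0\<close> _ x(1)] \<open>C \<ge> 1\<close> y(2) by (simp add: x(2))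
    then obtain l where l: "x \<longlonglongrightarrow> l" using Cauchy_convergent_iff convergent_def by blast
    then have "l \<in> S" using closed_sequentially[OF assms(2)] x(1) by blast
    have "(\<lambda>n. C * dist (x n) l powr \<beta>) \<longlonglongrightarrow> C * dist l l powr \<beta>"
      by (intro tendsto_mult_left tendsto_dist_powr l tendsto_const assms(3))
    then have "(\<lambda>n. C * dist (x n) l powr \<beta>) \<longlonglongrightarrow> 0" by simp
    then have "(\<lambda>n. f (x n)) \<longlonglongrightarrow> f l"
      by (rule Lim_transform_dist_bound[OF tendsto_const _ always_eventually])
        (intro allI bi_holder_on_upper[OF holder x(1) \<open>l \<in> S\<close>])
    moreover have "f l \<in> S'" using bij \<open>l \<in> S\<close> by (auto simp: bij_betw_def)
    ultimately show ?thesis using x(2) by auto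
  qed
  then have "complete S'" unfolding complete_def by blast
  then show ?thesis by (rule complete_imp_closed)
qed

section \<open>Continuous convergence of equi-Hoelder maps\<close>

text \<open>The subsequence \<open>k\<close> is built in because limits of points of \<open>F (k j) ` Xs (k j)\<close> have to be
  identified in the limsup half of Attouch-Wets convergence.\<close>

definition continuously_converges ::
    "(nat \<Rightarrow> 'a::topological_space \<Rightarrow> 'b::topological_space) \<Rightarrow> (nat \<Rightarrow> 'a set) \<Rightarrow> 'a set \<Rightarrow> ('a \<Rightarrow> 'b) \<Rightarrow> bool"
  where "continuously_converges F Xs T g \<longleftrightarrow> (\<forall>k u p. strict_mono k \<and> (\<forall>j. u j \<in> Xs (k j)) \<and> u \<longlonglongrightarrow> p \<and> p \<in> T
    \<longrightarrow> (\<lambda>j. F (k j) (u j)) \<longlonglongrightarrow> g p)"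

lemma continuously_convergesD:
  assumes "continuously_converges F Xs T g" "strict_mono k" "\<And>j. u j \<in> Xs (k j)" "u \<longlonglongrightarrow> p" "p \<in> T"
  shows "(\<lambda>j. F (k j) (u j)) \<longlonglongrightarrow> g p"
  using assms unfolding continuously_converges_def by blast

lemma diagonal_convergent_subseq:
  fixes Z :: "nat \<Rightarrow> nat \<Rightarrow> 'a::heine_borel"
  assumes "\<And>n. bounded (range (Z n))"
  obtains \<phi> :: "nat \<Rightarrow> nat" where "strict_mono \<phi>" "\<And>n. convergent (Z n \<circ> \<phi>)"
proof -
  interpret diag: subseqs "\<lambda>n s. convergent (Z n \<circ> s)"
  proof
    fix n and s :: "nat \<Rightarrow> nat"
    have "bounded (range (Z n \<circ> s))" by (rule bounded_subset[OF assms]) auto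
    then obtain l r where "strict_mono r" "((Z n \<circ> s) \<circ> r) \<longlonglongrightarrow> l"
      using bounded_imp_convergent_subsequence by blast
    then show "\<exists>r'. strict_mono r' \<and> convergent (Z n \<circ> (s \<circ> r'))"
      by (auto simp: convergent_def o_assoc)
  qed
  have "convergent (Z n \<circ> diag.diagseq)" for n
  proof -
    have "convergent (Z n \<circ> (diag.diagseq \<circ> (+) (Suc n)))"
      by (rule diag.diagseq_holds) (auto simp: convergent_def o_assoc intro: LIMSEQ_subseq_LIMSEQ)
    then obtain l where "(\<lambda>j. (Z n \<circ> diag.diagseq) (j + Suc n)) \<longlonglongrightarrow> l"
      by (auto simp: convergent_def o_def add.commute)
    then show ?thesis unfolding convergent_def by (blast intro: LIMSEQ_offset)
  qed
  with diag.subseq_diagseq show thesis by (rule that)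
qed

lemma bounded_range_equi_holder:
  fixes F :: "nat \<Rightarrow> 'a::metric_space \<Rightarrow> 'b::metric_space"
  assumes base: "\<And>j. z \<in> Xs j" "bounded (range (\<lambda>j. F j z))"
    and a: "\<And>j. a j \<in> Xs j" "a \<longlonglongrightarrow> p"
    and holder: "\<And>j u v. u \<in> Xs j \<Longrightarrow> v \<in> Xs j \<Longrightarrow> dist (F j u) (F j v) \<le> C * dist u v powr \<beta>"
    and "0 \<le> C" "\<beta> > 0"
  shows "bounded (range (\<lambda>j. F j (a j)))"
proof -
  obtain B where B: "\<And>j. dist z (a j) \<le> B"
    using convergent_imp_bounded[OF a(2)] by (auto simp: bounded_any_center[of _ z])
  obtain c R where R: "\<And>j. dist c (F j z) \<le> R" using base(2) by (auto simp: bounded_def)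
  have "dist c (F j (a j)) \<le> R + C * B powr \<beta>" for j
  proof -
    have "dist (F j z) (F j (a j)) \<le> C * dist z (a j) powr \<beta>" by (rule holder[OF base(1) a(1)])
    also have "\<dots> \<le> C * B powr \<beta>" using B \<open>0 \<le> C\<close> \<open>\<beta> > 0\<close> by (intro mult_left_mono powr_mono2) auto
    finally show ?thesis using R[of j] dist_triangle[of c "F j (a j)" "F j z"] by linarith
  qed
  then show ?thesis unfolding bounded_def by blast
qed

lemma equi_holder_convergent_if_dense:
  fixes F :: "nat \<Rightarrow> 'a::metric_space \<Rightarrow> 'b::complete_space"
  assumes a: "\<And>p j. p \<in> T \<Longrightarrow> a p j \<in> Xs j" "\<And>p. p \<in> T \<Longrightarrow> a p \<longlonglongrightarrow> p"
    and D: "D \<subseteq> T" "T \<subseteq> closure D" and conv: "\<And>d. d \<in> D \<Longrightarrow> convergent (\<lambda>j. F j (a d j))"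
    and holder: "\<And>j u v. u \<in> Xs j \<Longrightarrow> v \<in> Xs j \<Longrightarrow> dist (F j u) (F j v) \<le> C * dist u v powr \<beta>"
    and "\<beta> > 0" "p \<in> T"
  shows "convergent (\<lambda>j. F j (a p j))"
proof -
  have "Cauchy (\<lambda>j. F j (a p j))"
  proof (rule Cauchy_if_near_Cauchy)
    fix e :: real
    assume "e > 0"
    obtain d where "d \<in> D" and d: "C * dist p d powr \<beta> < e"
    proof -
      obtain s where s: "\<And>i. s i \<in> D" "s \<longlonglongrightarrow> p"
        using D(2) \<open>p \<in> T\<close> closure_sequential by blast
      have "(\<lambda>i. C * dist p (s i) powr \<beta>) \<longlonglongrightarrow> C * dist p p powr \<beta>"
        by (intro tendsto_mult_left tendsto_dist_powr tendsto_const s(2) \<open>\<beta> > 0\<close>)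
      then have "eventually (\<lambda>i. C * dist p (s i) powr \<beta> < e) sequentially"
        using \<open>e > 0\<close> by (simp add: order_tendsto_iff)
      then obtain i where "C * dist p (s i) powr \<beta> < e"
        using eventually_happens'[OF sequentially_bot] by blast
      with s(1) that show thesis by blast
    qed
    have "d \<in> T" using \<open>d \<in> D\<close> D(1) by blast
    have "(\<lambda>j. C * dist (a p j) (a d j) powr \<beta>) \<longlonglongrightarrow> C * dist p d powr \<beta>"
      by (intro tendsto_mult_left tendsto_dist_powr a(2) \<open>p \<in> T\<close> \<open>d \<in> T\<close> \<open>\<beta> > 0\<close>)
    then have "eventually (\<lambda>j. C * dist (a p j) (a d j) powr \<beta> < e) sequentially"
      using d by (simp add: order_tendsto_iff)
    then have "eventually (\<lambda>j. dist (F j (a p j)) (F j (a d j)) < e) sequentially"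
      by eventually_elim (rule le_less_trans[OF holder[OF a(1)[OF \<open>p \<in> T\<close>] a(1)[OF \<open>d \<in> T\<close>]]])
    then show "\<exists>y. Cauchy y \<and> eventually (\<lambda>j. dist (F j (a p j)) (y j) < e) sequentially"
      using conv[OF \<open>d \<in> D\<close>] Cauchy_convergent_iff by blast
  qed
  then show ?thesis by (simp add: Cauchy_convergent_iff)
qed

lemma equi_holder_continuously_converges:
  fixes F :: "nat \<Rightarrow> 'a::metric_space \<Rightarrow> 'b::metric_space"
  assumes a: "\<And>p j. p \<in> T \<Longrightarrow> a p j \<in> Xs j" "\<And>p. p \<in> T \<Longrightarrow> a p \<longlonglongrightarrow> p"
    and lim: "\<And>p. p \<in> T \<Longrightarrow> (\<lambda>j. F j (a p j)) \<longlonglongrightarrow> g p"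
    and holder: "\<And>j u v. u \<in> Xs j \<Longrightarrow> v \<in> Xs j \<Longrightarrow> dist (F j u) (F j v) \<le> C * dist u v powr \<beta>"
    and "\<beta> > 0"
  shows "continuously_converges F Xs T g"
  unfolding continuously_converges_def
proof (intro allI impI, elim conjE)
  fix k u p
  assume k: "strict_mono k" and u: "\<forall>j. u j \<in> Xs (k j)" and "u \<longlonglongrightarrow> p" "p \<in> T"
  have "(a p \<circ> k) \<longlonglongrightarrow> p" by (rule LIMSEQ_subseq_LIMSEQ[OF a(2)[OF \<open>p \<in> T\<close>] k])
  then have "(\<lambda>j. C * dist (u j) (a p (k j)) powr \<beta>) \<longlonglongrightarrow> C * dist p p powr \<beta>"
    using \<open>u \<longlonglongrightarrow> p\<close> by (intro tendsto_mult_left tendsto_dist_powr \<open>\<beta> > 0\<close>) (simp_all add: o_def)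
  then have small: "(\<lambda>j. C * dist (u j) (a p (k j)) powr \<beta>) \<longlonglongrightarrow> 0" by simp
  have "(\<lambda>j. F (k j) (a p (k j))) \<longlonglongrightarrow> g p"
    using LIMSEQ_subseq_LIMSEQ[OF lim[OF \<open>p \<in> T\<close>] k] by (simp add: o_def)
  moreover have "\<forall>j. dist (F (k j) (u j)) (F (k j) (a p (k j))) \<le> C * dist (u j) (a p (k j)) powr \<beta>"
    using holder[OF u[rule_format] a(1)[OF \<open>p \<in> T\<close>]] by blast
  ultimately show "(\<lambda>j. F (k j) (u j)) \<longlonglongrightarrow> g p"
    by (rule Lim_transform_dist_bound[OF _ small always_eventually])
qed

lemma equi_holder_convergent_subseq:
  fixes F :: "nat \<Rightarrow> 'a::{metric_space, second_countable_topology} \<Rightarrow> 'b::heine_borel"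
  assumes approx: "\<And>p. p \<in> T \<Longrightarrow> \<exists>a. (\<forall>j. a j \<in> Xs j) \<and> a \<longlonglongrightarrow> p"
    and base: "\<And>j. z \<in> Xs j" "bounded (range (\<lambda>j. F j z))"
    and holder: "\<And>j u v. u \<in> Xs j \<Longrightarrow> v \<in> Xs j \<Longrightarrow> dist (F j u) (F j v) \<le> C * dist u v powr \<beta>"
    and "0 \<le> C" "\<beta> > 0"
  obtains \<phi> :: "nat \<Rightarrow> nat" and g
  where "strict_mono \<phi>" "continuously_converges (\<lambda>j. F (\<phi> j)) (\<lambda>j. Xs (\<phi> j)) T g"
proof (cases "T = {}")
  case True
  show thesis by (rule that[of id]) (auto simp: True strict_mono_id continuously_converges_def)
next
  case False
  have "\<forall>p\<in>T. \<exists>a. (\<forall>j. a j \<in> Xs j) \<and> a \<longlonglongrightarrow> p" using approx by blast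
  from bchoice[OF this] obtain a where a: "\<And>p j. p \<in> T \<Longrightarrow> a p j \<in> Xs j" "\<And>p. p \<in> T \<Longrightarrow> a p \<longlonglongrightarrow> p"
    by blast
  obtain D where D: "countable D" "D \<subseteq> T" "T \<subseteq> closure D" using separable by blast
  have "D \<noteq> {}" using False D(3) by auto
  define q where "q = from_nat_into D"
  have q: "range q = D" using D(1) \<open>D \<noteq> {}\<close> by (simp add: q_def)
  then have qT: "q n \<in> T" for n using D(2) by auto
  obtain \<phi> :: "nat \<Rightarrow> nat" where \<phi>: "strict_mono \<phi>"
    and conv_q: "\<And>n. convergent ((\<lambda>j. F j (a (q n) j)) \<circ> \<phi>)"
    using diagonal_convergent_subseq[of "\<lambda>n j. F j (a (q n) j)"]
      bounded_range_equi_holder[OF base a(1)[OF qT] a(2)[OF qT] holder \<open>0 \<le> C\<close> \<open>\<beta> > 0\<close>] by blast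
  let ?a = "\<lambda>p j. a p (\<phi> j)"
  have a\<phi>: "\<And>p j. p \<in> T \<Longrightarrow> ?a p j \<in> Xs (\<phi> j)" "\<And>p. p \<in> T \<Longrightarrow> ?a p \<longlonglongrightarrow> p"
    using a LIMSEQ_subseq_LIMSEQ[OF a(2) \<phi>] by (auto simp: o_def)
  have holder\<phi>: "\<And>j u v. u \<in> Xs (\<phi> j) \<Longrightarrow> v \<in> Xs (\<phi> j)
      \<Longrightarrow> dist (F (\<phi> j) u) (F (\<phi> j) v) \<le> C * dist u v powr \<beta>"
    by (rule holder)
  have "convergent (\<lambda>j. F (\<phi> j) (?a p j))" if "p \<in> T" for p
  proof (rule equi_holder_convergent_if_dense[OF a\<phi> D(2,3) _ holder\<phi> \<open>\<beta> > 0\<close> that])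
    fix d
    assume "d \<in> D"
    then obtain n where "d = q n" using q by blast
    then show "convergent (\<lambda>j. F (\<phi> j) (?a d j))" using conv_q[of n] by (simp add: o_def)
  qed
  then have lim: "(\<lambda>j. F (\<phi> j) (?a p j)) \<longlonglongrightarrow> lim (\<lambda>j. F (\<phi> j) (?a p j))" if "p \<in> T" for p
    using that by (simp add: convergent_LIMSEQ_iff)
  have "continuously_converges (\<lambda>j. F (\<phi> j)) (\<lambda>j. Xs (\<phi> j)) T (\<lambda>p. lim (\<lambda>j. F (\<phi> j) (?a p j)))"
    using a\<phi> lim holder\<phi> \<open>\<beta> > 0\<close> by (rule equi_holder_continuously_converges)
  with \<phi> show thesis by (rule that)
qed

lemma continuously_converges_bi_holder_on:
  fixes F :: "nat \<Rightarrow> 'a::real_normed_vector \<Rightarrow> 'b::metric_space"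
  assumes conv: "continuously_converges F Xs T g" and aw: "attouch_wets Xs T"
    and ne: "\<And>j. Xs j \<noteq> {}" and holder: "\<And>j. bi_holder_on \<beta> C (Xs j) (F j)"
    and "\<beta> > 0" "C > 0"
  shows "bi_holder_on \<beta> C T g"
  unfolding bi_holder_on_def
proof (intro ballI)
  fix p p'
  assume "p \<in> T" "p' \<in> T"
  obtain a where a: "\<And>j. a j \<in> Xs j" "a \<longlonglongrightarrow> p"
    using attouch_wets_approx_seq[OF aw ne \<open>p \<in> T\<close>] by blast
  obtain a' where a': "\<And>j. a' j \<in> Xs j" "a' \<longlonglongrightarrow> p'"
    using attouch_wets_approx_seq[OF aw ne \<open>p' \<in> T\<close>] by blast
  have "(\<lambda>j. F (id j) (a j)) \<longlonglongrightarrow> g p" "(\<lambda>j. F (id j) (a' j)) \<longlonglongrightarrow> g p'"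
    by (rule continuously_convergesD[OF conv strict_mono_id]; use a a' \<open>p \<in> T\<close> \<open>p' \<in> T\<close> in simp)+
  then have lim_F: "(\<lambda>j. dist (F j (a j)) (F j (a' j))) \<longlonglongrightarrow> dist (g p) (g p')"
    by (auto intro: tendsto_dist)
  have lim_dist: "(\<lambda>j. dist (a j) (a' j) powr \<beta>) \<longlonglongrightarrow> dist p p' powr \<beta>"
    by (rule tendsto_dist_powr[OF a(2) a'(2) \<open>\<beta> > 0\<close>])
  show "dist p p' powr \<beta> / C \<le> dist (g p) (g p') \<and> dist (g p) (g p') \<le> C * dist p p' powr \<beta>"
  proof
    show "dist p p' powr \<beta> / C \<le> dist (g p) (g p')"
      using \<open>C > 0\<close> by (intro tendsto_le[OF sequentially_bot lim_F tendsto_divide[OF lim_dist tendsto_const]]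
          always_eventually allI bi_holder_on_lower[OF holder a(1) a'(1)]) simp
    show "dist (g p) (g p') \<le> C * dist p p' powr \<beta>"
      by (intro tendsto_le[OF sequentially_bot tendsto_mult_left[OF lim_dist] lim_F]
          always_eventually allI bi_holder_on_upper[OF holder a(1) a'(1)])
  qed
qed

lemma continuously_converges_attouch_wets_image:
  fixes F :: "nat \<Rightarrow> 'a::euclidean_space \<Rightarrow> 'b::euclidean_space"
  assumes conv: "continuously_converges F Xs T g" and aw: "attouch_wets Xs T" "closed T"
    and "closed (g ` T)"
    and zero: "\<And>j. 0 \<in> Xs j" "\<And>j. F j 0 = 0"
    and holder: "\<And>j. bi_holder_on \<beta> C (Xs j) (F j)" and "\<beta> > 0" "C > 0"
  shows "attouch_wets (\<lambda>j. F j ` Xs j) (g ` T)"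
proof (rule attouch_wets_if_sequential[OF \<open>closed (g ` T)\<close>])
  fix y
  assume "y \<in> g ` T"
  then obtain p where "p \<in> T" "y = g p" by blast
  obtain a where a: "\<And>j. a j \<in> Xs j" "a \<longlonglongrightarrow> p"
    using attouch_wets_approx_seq[OF aw(1) _ \<open>p \<in> T\<close>] zero(1) by blast
  have "(\<lambda>j. F (id j) (a j)) \<longlonglongrightarrow> g p"
    by (rule continuously_convergesD[OF conv strict_mono_id]) (use a \<open>p \<in> T\<close> in simp_all)
  then show "\<exists>b. (\<forall>j. b j \<in> F j ` Xs j) \<and> b \<longlonglongrightarrow> y"
    using a(1) \<open>y = g p\<close> by (intro exI[of _ "\<lambda>j. F j (a j)"]) auto
next
  fix k v y
  assume k: "strict_mono k" and v: "\<And>j. v j \<in> F (k j) ` Xs (k j)" and "v \<longlonglongrightarrow> y"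
  have "\<forall>j. \<exists>x. x \<in> Xs (k j) \<and> v j = F (k j) x" using v by blast
  from choice[OF this] obtain u where u: "\<And>j. u j \<in> Xs (k j)" "\<And>j. v j = F (k j) (u j)"
    by blast
  obtain B where B: "\<And>j. norm (v j) \<le> B"
    using convergent_imp_bounded[OF \<open>v \<longlonglongrightarrow> y\<close>] by (auto simp: bounded_iff)
  have "norm (u j) \<le> (C * B) powr (1 / \<beta>)" for j
    using bi_holder_on_norm_le[OF holder zero u(1) _ \<open>\<beta> > 0\<close> \<open>C > 0\<close>] B u(2) by simp
  then have "bounded (range u)" by (auto simp: bounded_iff)
  then obtain h p where h: "strict_mono h" "(u \<circ> h) \<longlonglongrightarrow> p"
    using bounded_imp_convergent_subsequence by blast
  have "p \<in> T" using attouch_wets_limit_mem[OF aw strict_mono_o[OF k h(1)] _ h(2)] u(1) by simp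
  have "(\<lambda>j. F ((k \<circ> h) j) ((u \<circ> h) j)) \<longlonglongrightarrow> g p"
    by (rule continuously_convergesD[OF conv strict_mono_o[OF k h(1)] _ h(2) \<open>p \<in> T\<close>]) (simp add: u(1))
  then have "(v \<circ> h) \<longlonglongrightarrow> g p" by (simp add: o_def u(2))
  then have "y = g p" using LIMSEQ_unique LIMSEQ_subseq_LIMSEQ[OF \<open>v \<longlonglongrightarrow> y\<close> h(1)] by blast
  then show "y \<in> g ` T" using \<open>p \<in> T\<close> by blast
qed

lemma attouch_wets_bi_holder_limit:
  fixes Xs :: "nat \<Rightarrow> 'a::euclidean_space set" and F :: "nat \<Rightarrow> 'a \<Rightarrow> 'b::euclidean_space"
  assumes aw: "attouch_wets Xs T" "closed T"
    and zero: "\<And>j. 0 \<in> Xs j" "\<And>j. F j 0 = 0"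
    and holder: "\<And>j. bi_holder_on \<beta> C (Xs j) (F j)" and "C \<ge> 1" "\<beta> > 0"
  obtains \<phi> :: "nat \<Rightarrow> nat" and g
  where "strict_mono \<phi>" "bi_holder_homeo \<beta> g T (g ` T)" "closed (g ` T)" "0 \<in> g ` T"
    "attouch_wets (\<lambda>j. F (\<phi> j) ` Xs (\<phi> j)) (g ` T)"
proof -
  have ne: "Xs j \<noteq> {}" for j using zero(1) by blast
  have approx: "\<exists>a. (\<forall>j. a j \<in> Xs j) \<and> a \<longlonglongrightarrow> p" if "p \<in> T" for p
    using attouch_wets_approx_seq[OF aw(1) ne that] by metis
  obtain \<phi> g where \<phi>: "strict_mono \<phi>"
    and conv: "continuously_converges (\<lambda>j. F (\<phi> j)) (\<lambda>j. Xs (\<phi> j)) T g"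
    by (rule equi_holder_convergent_subseq[OF approx zero(1) _ bi_holder_on_upper[OF holder]])
      (use \<open>C \<ge> 1\<close> \<open>\<beta> > 0\<close> zero(2) in auto)
  have aw\<phi>: "attouch_wets (\<lambda>j. Xs (\<phi> j)) T" by (rule attouch_wets_subseq[OF aw(1) \<phi>])
  have "bi_holder_on \<beta> C T g"
    using continuously_converges_bi_holder_on[OF conv aw\<phi> ne holder \<open>\<beta> > 0\<close>] \<open>C \<ge> 1\<close> by simp
  then have homeo: "bi_holder_homeo \<beta> g T (g ` T)" using \<open>C \<ge> 1\<close> by (rule bi_holder_homeo_image)
  have closed: "closed (g ` T)" by (rule bi_holder_homeo_closed_image[OF homeo aw(2) \<open>\<beta> > 0\<close>])
  have "0 \<in> T" using attouch_wets_limit_mem[OF aw strict_mono_id, of "\<lambda>_. 0"] zero(1) by simp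
  then have "(\<lambda>j. F (\<phi> (id j)) 0) \<longlonglongrightarrow> g 0"
    using continuously_convergesD[OF conv strict_mono_id, of "\<lambda>_. 0"] zero(1) by simp
  then have "(\<lambda>j. 0) \<longlonglongrightarrow> g 0" by (simp add: zero(2))
  from \<open>0 \<in> T\<close> LIMSEQ_unique[OF tendsto_const this] have "0 \<in> g ` T" by (rule rev_image_eqI)
  moreover have "attouch_wets (\<lambda>j. F (\<phi> j) ` Xs (\<phi> j)) (g ` T)"
    using continuously_converges_attouch_wets_image[OF conv aw\<phi> aw(2) closed zero holder \<open>\<beta> > 0\<close>]
      \<open>C \<ge> 1\<close> by simp
  ultimately show thesis using that \<phi> homeo closed by blast
qed

section \<open>Blow-ups\<close>

definition blowup :: "real \<Rightarrow> 'a::real_normed_vector \<Rightarrow> 'a set \<Rightarrow> 'a set"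
  where "blowup r x X = (\<lambda>y. (1 / r) *\<^sub>R (y - x)) ` X"

definition blowup_map :: "real \<Rightarrow> real \<Rightarrow> 'a::real_normed_vector \<Rightarrow> ('a \<Rightarrow> 'b::real_normed_vector) \<Rightarrow> 'a \<Rightarrow> 'b"
  where "blowup_map r s x f u = (1 / s) *\<^sub>R (f (x + r *\<^sub>R u) - f x)"

definition blowup_scales :: "(nat \<Rightarrow> real) \<Rightarrow> bool"
  where "blowup_scales r \<longleftrightarrow> (\<forall>j. r j > 0) \<and> decseq r \<and> r \<longlonglongrightarrow> 0"

lemma mem_Tan_iff:
  "T \<in> Tan X x \<longleftrightarrow> closed T \<and> 0 \<in> T \<and> (\<exists>r. blowup_scales r \<and> attouch_wets (\<lambda>j. blowup (r j) x X) T)"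
  by (simp add: Tan_def blowup_def blowup_scales_def conj_assoc)

lemma blowup_scales_powr_subseq:
  assumes "blowup_scales r" "\<beta> > 0" "strict_mono \<phi>"
  shows "blowup_scales (\<lambda>j. r (\<phi> j) powr \<beta>)"
proof -
  have r: "\<And>j. r j > 0" "decseq r" "r \<longlonglongrightarrow> 0" using assms(1) by (auto simp: blowup_scales_def)
  have "decseq (\<lambda>j. r (\<phi> j) powr \<beta>)"
  proof (rule antimonoI)
    fix m n :: nat
    assume "m \<le> n"
    then have "r (\<phi> n) \<le> r (\<phi> m)" using decseqD[OF r(2)] strict_mono_less_eq[OF assms(3)] by blast
    then show "r (\<phi> n) powr \<beta> \<le> r (\<phi> m) powr \<beta>" using r(1)[of "\<phi> n"] \<open>\<beta> > 0\<close> by (simp add: powr_mono2)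
  qed
  moreover have "(\<lambda>j. r (\<phi> j) powr \<beta>) \<longlonglongrightarrow> 0"
    using LIMSEQ_subseq_LIMSEQ[OF r(3) assms(3)] r(1) \<open>\<beta> > 0\<close>
    by (intro tendsto_zero_powrI) (auto simp: o_def less_imp_le)
  moreover have "r (\<phi> j) powr \<beta> > 0" for j using r(1)[of "\<phi> j"] by simp
  ultimately show ?thesis by (simp add: blowup_scales_def)
qed

lemma zero_mem_blowup: "x \<in> X \<Longrightarrow> 0 \<in> blowup r x X"
  unfolding blowup_def by (rule image_eqI[of _ _ x]) auto

lemma blowup_map_zero [simp]: "blowup_map r s x f 0 = 0"
  by (simp add: blowup_map_def)

lemma blowup_map_image:
  assumes "r \<noteq> 0"
  shows "blowup_map r s x f ` blowup r x X = blowup s (f x) (f ` X)"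
  using assms unfolding blowup_def blowup_map_def image_image by simp

lemma bi_holder_on_blowup_map:
  assumes holder: "bi_holder_on \<beta> C X f" and "r > 0"
  shows "bi_holder_on \<beta> C (blowup r x X) (blowup_map r (r powr \<beta>) x f)"
  unfolding bi_holder_on_def
proof (intro ballI)
  fix u v
  assume "u \<in> blowup r x X" "v \<in> blowup r x X"
  then obtain y y' where y: "y \<in> X" "u = (1 / r) *\<^sub>R (y - x)" and y': "y' \<in> X" "v = (1 / r) *\<^sub>R (y' - x)"
    by (auto simp: blowup_def)
  let ?F = "blowup_map r (r powr \<beta>) x f"
  have dist_F: "dist (?F u) (?F v) = dist (f y) (f y') / r powr \<beta>"
    using \<open>r > 0\<close> by (simp add: blowup_map_def y y' dist_norm scaleR_diff_right[symmetric])
  have dist_powr: "dist u v powr \<beta> = dist y y' powr \<beta> / r powr \<beta>"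
    using \<open>r > 0\<close> by (simp add: y y' dist_norm scaleR_diff_right[symmetric] powr_divide)
  have "0 < r powr \<beta>" using \<open>r > 0\<close> by simp
  show "dist u v powr \<beta> / C \<le> dist (?F u) (?F v) \<and> dist (?F u) (?F v) \<le> C * dist u v powr \<beta>"
  proof
    have "dist y y' powr \<beta> / C / r powr \<beta> \<le> dist (f y) (f y') / r powr \<beta>"
      by (rule divide_right_mono[OF bi_holder_on_lower[OF holder y(1) y'(1)]])
        (use \<open>0 < r powr \<beta>\<close> in simp)
    then show "dist u v powr \<beta> / C \<le> dist (?F u) (?F v)"
      by (simp add: dist_F dist_powr divide_divide_eq_left mult.commute)
    have "dist (f y) (f y') / r powr \<beta> \<le> C * dist y y' powr \<beta> / r powr \<beta>"
      by (rule divide_right_mono[OF bi_holder_on_upper[OF holder y(1) y'(1)]])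
        (use \<open>0 < r powr \<beta>\<close> in simp)
    then show "dist (?F u) (?F v) \<le> C * dist u v powr \<beta>"
      by (simp add: dist_F dist_powr)
  qed
qed

theorem lemma9p1:
  fixes X :: "'a::euclidean_space set" and Y :: "'b::euclidean_space set"
    and f :: "'a \<Rightarrow> 'b" and t :: real
  assumes "t > 0" and "closed X" and "closed Y"
    and "bi_holder_homeo (1 / t) f X Y"
  shows "\<forall>x0\<in>X. \<forall>T\<in>Tan X x0. \<exists>T'\<in>Tan Y (f x0). \<exists>g :: 'a \<Rightarrow> 'b.
           bi_holder_homeo (1 / t) g T T'"
proof (intro ballI)
  fix x0 T
  assume "x0 \<in> X" "T \<in> Tan X x0"
  obtain C where bij: "bij_betw f X Y" and "C \<ge> 1" and holder: "bi_holder_on (1 / t) C X f"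
    using assms(4) by (auto simp: bi_holder_homeo_iff)
  obtain r where "closed T" and r: "blowup_scales r" and aw: "attouch_wets (\<lambda>j. blowup (r j) x0 X) T"
    using \<open>T \<in> Tan X x0\<close> by (auto simp: mem_Tan_iff)
  have r_pos: "r j > 0" for j using r by (simp add: blowup_scales_def)
  define F where "F j = blowup_map (r j) (r j powr (1 / t)) x0 f" for j
  obtain \<phi> g where \<phi>: "strict_mono \<phi>" and homeo: "bi_holder_homeo (1 / t) g T (g ` T)"
    and "closed (g ` T)" "0 \<in> g ` T"
    and aw': "attouch_wets (\<lambda>j. F (\<phi> j) ` blowup (r (\<phi> j)) x0 X) (g ` T)"
    by (rule attouch_wets_bi_holder_limit[OF aw \<open>closed T\<close>, of F "1 / t" C])
      (use \<open>x0 \<in> X\<close> \<open>C \<ge> 1\<close> \<open>t > 0\<close> r_pos holder in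
        \<open>auto simp: F_def zero_mem_blowup bi_holder_on_blowup_map\<close>)
  have "F (\<phi> j) ` blowup (r (\<phi> j)) x0 X = blowup (r (\<phi> j) powr (1 / t)) (f x0) Y" for j
    using bij r_pos[of "\<phi> j"] by (simp add: F_def blowup_map_image bij_betw_def)
  then have "g ` T \<in> Tan Y (f x0)"
    using \<open>closed (g ` T)\<close> \<open>0 \<in> g ` T\<close> aw' blowup_scales_powr_subseq[OF r _ \<phi>, of "1 / t"] \<open>t > 0\<close>
    by (auto simp: mem_Tan_iff)
  then show "\<exists>T'\<in>Tan Y (f x0). \<exists>g :: 'a \<Rightarrow> 'b. bi_holder_homeo (1 / t) g T T'"
    using homeo by blast
qed

end
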